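(* Let $k<n$. No location-allocation mechanism $M_A$ that is allocation-anonymous is DIC.
   Context: There are $n$ agents $N=\{1,\dots,n\}$ with locations $x_i\in[0,1]$, profile $\boldsymbol{x}$; the facility has capacity $k$ (positive integer). Let $N_k=\{A\subseteq N: 0<|A|\le k\}$. A location-allocation mechanism is a function $M_A:[0,1]^n\to[0,1]\times N_k$, written $M_A(\boldsymbol{x})=(s_{\boldsymbol{x}},A_{\boldsymbol{x}})$, choosing from the reported locations a facility location and a set of agents allowed to be served. Agent $i$ with true location $x_i$ gets utility $1-|s-x_i|$ from outcome $(s,A)$ if $i\in A$, and $0$ if $i\notin A$. $M_A$ is DIC if for every agent $i$, every true location $x_i$, every report $x_i'$ and every reports $\hat{\boldsymbol{x}}_{-i}$ of the other agents, agent $i$'s utility from $M_A(x_i,\hat{\boldsymbol{x}}_{-i})$ is at least its utility from $M_A(x_i',\hat{\boldsymbol{x}}_{-i})$. A profile $\boldsymbol{x}$ is $i$-identifiable if $x_i\ne x_j$ for all $j\ne i$. $M_A$ is allocation-anonymous if for all distinct $i,j\in N$ and every $i$-identifiable profile $\boldsymbol{x}$, letting $\boldsymbol{x}'$ be obtained from $\boldsymbol{x}$ by swapping the locations of $i$ and $j$ ($x_i'=x_j$, $x_j'=x_i$, $x_\ell'=x_\ell$ otherwise), we have $i\in A_{\boldsymbol{x}}$ if and only if $j\in A_{\boldsymbol{x}'}$. *)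

theory Defs
  imports Main "HOL-Library.FuncSet" Complex_Main
begin

definition profiles :: "nat \<Rightarrow> (nat \<Rightarrow> real) set" where
  "profiles n = ({1..n} \<rightarrow>\<^sub>E {0..1})"

definition Nk :: "nat \<Rightarrow> nat \<Rightarrow> nat set set" where
  "Nk n k = {A. A \<subseteq> {1..n} \<and> 0 < card A \<and> card A \<le> k}"

definition la_mechanism :: "nat \<Rightarrow> nat \<Rightarrow> ((nat \<Rightarrow> real) \<Rightarrow> real \<times> nat set) \<Rightarrow> bool" where
  "la_mechanism n k M \<longleftrightarrow>
     (\<forall>x\<in>profiles n. fst (M x) \<in> {0..1} \<and> snd (M x) \<in> Nk n k)"

definition utility :: "nat \<Rightarrow> real \<Rightarrow> real \<times> nat set \<Rightarrow> real" where
  "utility i xi out = (if i \<in> snd out then 1 - \<bar>fst out - xi\<bar> else 0)"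

(* dominant-strategy incentive compatibility: x is (x_i, xhat_{-i}), with
   true location x i; x(i := v) is the misreport *)
definition DIC :: "nat \<Rightarrow> ((nat \<Rightarrow> real) \<Rightarrow> real \<times> nat set) \<Rightarrow> bool" where
  "DIC n M \<longleftrightarrow>
     (\<forall>i\<in>{1..n}. \<forall>x\<in>profiles n. \<forall>v\<in>{0..1::real}.
        utility i (x i) (M x) \<ge> utility i (x i) (M (x(i := v))))"

definition identifiable :: "nat \<Rightarrow> nat \<Rightarrow> (nat \<Rightarrow> real) \<Rightarrow> bool" where
  "identifiable n i x \<longleftrightarrow> (\<forall>j\<in>{1..n}. j \<noteq> i \<longrightarrow> x i \<noteq> x j)"

definition allocation_anonymous :: "nat \<Rightarrow> ((nat \<Rightarrow> real) \<Rightarrow> real \<times> nat set) \<Rightarrow> bool" where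
  "allocation_anonymous n M \<longleftrightarrow>
     (\<forall>i\<in>{1..n}. \<forall>j\<in>{1..n}. \<forall>x\<in>profiles n. i \<noteq> j \<longrightarrow> identifiable n i x \<longrightarrow>
        (i \<in> snd (M x) \<longleftrightarrow> j \<in> snd (M (x(i := x j, j := x i)))))"

end

theory Submission
  imports Defs
begin

(* Under DIC an agent with an interior true location t gets positive utility from any report
   that gets it served, since the facility lies in [0,1]; so reporting t must get it served too.
   Hence whether an agent is served does not depend on which interior location it reports.
   In the profile where everyone sits at 1/2, let agent i move to 1/4: this does not change
   whether i is served, the resulting profile is i-identifiable, and swapping i with j yields
   the profile where j moved instead. Allocation anonymity then makes i and j served alike,
   so all or none of the n agents are served, which no allocation in N_k with k < n allows. *)

lemma fun_upd_in_profiles: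
  assumes "x \<in> profiles n" "i \<in> {1..n}" "v \<in> {0..1}"
  shows "x(i := v) \<in> profiles n"
  using assms unfolding profiles_def by (auto simp: PiE_def Pi_def extensional_def)

lemma restrict_const_in_profiles:
  assumes "c \<in> {0..1}"
  shows "restrict (\<lambda>_. c) {1..n} \<in> profiles n"
  using assms unfolding profiles_def by auto

lemma DIC_served_at_interior_report:
  assumes "DIC n M" "la_mechanism n k M" "i \<in> {1..n}" "x \<in> profiles n"
    and "v \<in> {0..1}" "t \<in> {0<..<1}"
    and "i \<in> snd (M (x(i := v)))"
  shows "i \<in> snd (M (x(i := t)))"
proof -
  have xt: "x(i := t) \<in> profiles n" and xv: "x(i := v) \<in> profiles n"
    using fun_upd_in_profiles assms(3-6) by auto
  have "fst (M (x(i := v))) \<in> {0..1}"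
    using assms(2) xv unfolding la_mechanism_def by blast
  then have "0 < utility i t (M (x(i := v)))"
    using assms(6,7) unfolding utility_def by auto
  also have "\<dots> \<le> utility i t (M (x(i := t)))"
    using assms(1,3,5) xt unfolding DIC_def by (metis fun_upd_same fun_upd_upd)
  finally show ?thesis
    unfolding utility_def by (auto split: if_splits)
qed

lemma DIC_served_iff_interior_reports:
  assumes "DIC n M" "la_mechanism n k M" "i \<in> {1..n}" "x \<in> profiles n"
    and "s \<in> {0<..<1}" "t \<in> {0<..<1}"
  shows "i \<in> snd (M (x(i := s))) \<longleftrightarrow> i \<in> snd (M (x(i := t)))"
  using DIC_served_at_interior_report[OF assms(1-4), of s t]
    DIC_served_at_interior_report[OF assms(1-4), of t s] assms(5,6) by auto

lemma DIC_anonymous_serves_all_or_none_at_const_profile: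
  assumes "DIC n M" "la_mechanism n k M" "allocation_anonymous n M"
    and "c \<in> {0<..<1}" "i \<in> {1..n}" "j \<in> {1..n}"
  defines "P \<equiv> restrict (\<lambda>_. c) {1..n}"
  shows "i \<in> snd (M P) \<longleftrightarrow> j \<in> snd (M P)"
proof (cases "i = j")
  case False
  have P: "P \<in> profiles n"
    unfolding P_def using assms(4) by (intro restrict_const_in_profiles) auto
  have moved_iff_stay: "l \<in> snd (M (P(l := c / 2))) \<longleftrightarrow> l \<in> snd (M P)" if "l \<in> {1..n}" for l
  proof -
    have "P(l := c) = P" using that by (auto simp: P_def)
    then show ?thesis
      using DIC_served_iff_interior_reports[OF assms(1,2) that P, of "c / 2" c] assms(4) by auto
  qed
  define Q where "Q = P(i := c / 2)"
  have "Q \<in> profiles n"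
    using fun_upd_in_profiles[OF P assms(5)] assms(4) by (auto simp: Q_def)
  moreover have "identifiable n i Q"
    using assms(4,5) unfolding identifiable_def Q_def P_def by auto
  ultimately have "i \<in> snd (M Q) \<longleftrightarrow> j \<in> snd (M (Q(i := Q j, j := Q i)))"
    using assms(3,5,6) False unfolding allocation_anonymous_def by blast
  moreover have "Q(i := Q j, j := Q i) = P(j := c / 2)"
    using assms(5,6) False by (auto simp: Q_def P_def fun_eq_iff)
  ultimately have "i \<in> snd (M (P(i := c / 2))) \<longleftrightarrow> j \<in> snd (M (P(j := c / 2)))"
    by (simp add: Q_def)
  then show ?thesis
    using moved_iff_stay assms(5,6) by blast
qed simp

theorem theorem5p3:
  fixes n k :: nat and M :: "(nat \<Rightarrow> real) \<Rightarrow> real \<times> nat set"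
  assumes "0 < k" and "k < n"
    and "la_mechanism n k M"
    and "allocation_anonymous n M"
  shows "\<not> DIC n M"
proof
  assume DIC: "DIC n M"
  define P where "P = restrict (\<lambda>_. 1 / 2 :: real) {1..n}"
  have "P \<in> profiles n"
    unfolding P_def by (intro restrict_const_in_profiles) auto
  then have served: "snd (M P) \<in> Nk n k"
    using assms(3) unfolding la_mechanism_def by blast
  then obtain i where i: "i \<in> snd (M P)" "i \<in> {1..n}"
    unfolding Nk_def by (force simp: card_gt_0_iff)
  have "snd (M P) \<noteq> {1..n}"
    using served assms(2) unfolding Nk_def by auto
  then obtain j where "j \<in> {1..n}" "j \<notin> snd (M P)"
    using served unfolding Nk_def by blast
  then show False
    using DIC_anonymous_serves_all_or_none_at_const_profile[OF DIC assms(3,4), of "1 / 2" i j] i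
    unfolding P_def by auto
qed

end
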